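(* Let $D$ be a crossing optimal normalized 2-page book drawing of $K_n$ and $1\le i<j\le n$. Then for every integer $m$ with $1\le m\le\min\{j-\lfloor n/2\rfloor-1,\,j-i-1\}$, the $m$-th entry in the order associated to $(i,j)$ has at least $\min\{j-\lceil n/2\rceil-m,\,i-1\}$ entries above it whose color differs from the color of $(i,j)$.
   Context: Normalized 2-page book drawing of $K_n$: vertices $(1,0),\dots,(n,0)$ labelled $1,\dots,n$; edges $i(i+1)$ on the spine; edge $1n$ in the upper half-plane; every other edge $ij$ a semicircle over $[i,j]$ in the upper or lower half-plane. Edges on the spine or in the upper half-plane are blue, others red. $M(D)$ has entries $(i,j)$, $1\le i<j\le n$ (row $i$, column $j$), colored as edge $ij$; entries $(i',j)$ with $i'<i$ are above $(i,j)$. The order associated to $(i,j)$ is the ordering of the entries $(i,l)$, $i<l<j$, that lists first those whose color differs from that of $(i,j)$ from right to left (decreasing $l$), followed by those with the same color as $(i,j)$ from left to right (increasing $l$). Crossing optimal: exactly $Z(n)=\frac14\lfloor\frac n2\rfloor\lfloor\frac{n-1}2\rfloor\lfloor\frac{n-2}2\rfloor\lfloor\frac{n-3}2\rfloor$ crossings. *)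

theory Defs
  imports Main
begin

text \<open>A normalized 2-page book drawing of K_n is encoded by its colouring
  blue i j (for 1 <= i < j <= n): True = blue (spine or upper half-plane),
  False = red (lower half-plane).\<close>

definition normalized_2page :: "nat \<Rightarrow> (nat \<Rightarrow> nat \<Rightarrow> bool) \<Rightarrow> bool" where
  "normalized_2page n blue \<longleftrightarrow>
     (\<forall>i. 1 \<le> i \<and> i < n \<longrightarrow> blue i (i + 1)) \<and> blue 1 n"

text \<open>Two semicircle edges ij and kl (i<j, k<l) in the same half-plane cross
  iff their endpoints interleave; spine edges and edges sharing an endpoint
  never cross.\<close>

definition crossings :: "nat \<Rightarrow> (nat \<Rightarrow> nat \<Rightarrow> bool) \<Rightarrow> nat" where
  "crossings n blue = card {(i, j, k, l). 1 \<le> i \<and> i < k \<and> k < j \<and> j < l \<and> l \<le> n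
                                         \<and> blue i j = blue k l}"

definition Z :: "nat \<Rightarrow> nat" where
  "Z n = ((n div 2) * ((n - 1) div 2) * ((n - 2) div 2) * ((n - 3) div 2)) div 4"

definition crossing_optimal :: "nat \<Rightarrow> (nat \<Rightarrow> nat \<Rightarrow> bool) \<Rightarrow> bool" where
  "crossing_optimal n blue \<longleftrightarrow> crossings n blue = Z n"

definition assoc_order :: "(nat \<Rightarrow> nat \<Rightarrow> bool) \<Rightarrow> nat \<Rightarrow> nat \<Rightarrow> nat list" where
  "assoc_order blue i j =
     filter (\<lambda>l. blue i l \<noteq> blue i j) (rev [i+1..<j]) @
     filter (\<lambda>l. blue i l = blue i j) [i+1..<j]"

definition above_diff :: "(nat \<Rightarrow> nat \<Rightarrow> bool) \<Rightarrow> nat \<Rightarrow> nat \<Rightarrow> bool \<Rightarrow> nat" where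
  "above_diff blue i l c = card {i'. 1 \<le> i' \<and> i' < i \<and> blue i' l \<noteq> c}"

end

theory Submission
  imports Defs
begin

text \<open>
  For an edge uv of a 2-page drawing on the vertices 1, ..., T, every other vertex w is put on
  one of two sides of uv according to the colour of wv if w < u, of uv if u < w < v, and of uw
  if v < w. The two side counts add up to T - 2 and play the role of the k of a k-edge; adding
  the vertices one at a time gives cr + \<Sum> (product of the two side counts) = 3 C(T,4).

  The deficit \<Sum> (k - smaller side count) is at least k(k+1)(k+2)/2: adding the vertex T+1
  raises it by (k+1)(k+2)/2 plus the number of edges uv whose side count in the colour of
  u(T+1) is at most k, and row u alone provides k + 2 - u of those (the first columns of the
  order associated to (u, T+1)). Crossing optimality forces equality in all these bounds, for
  every initial segment 1, ..., j - 1 of the vertices. Hence in row i only the first k + 2 - i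
  columns of the order associated to (i,j) can have side count at most k; since the side count
  of the m-th of them is m - 1 plus the number of differently coloured entries above it, this
  yields the bound.
\<close>

declare sum_of_bool_eq [simp del]

lemma sum_of_bool_compl:
  "finite A \<Longrightarrow> (\<Sum>w\<in>A. of_bool (P w \<noteq> c)) + (\<Sum>w\<in>A. of_bool (P w \<noteq> (\<not> c))) = (card A :: nat)"
  by (induction rule: finite_induct) auto

lemma sum_of_bool_add_not: "finite A \<Longrightarrow> (\<Sum>x\<in>A. of_bool (P x) + of_bool (\<not> P x) :: nat) = card A"
  by (subst sum.cong[OF refl, of _ _ "\<lambda>_. 1"]) auto

lemma sum_of_bool_card: "finite A \<Longrightarrow> (\<Sum>x\<in>A. of_bool (P x) :: nat) = card {x \<in> A. P x}"
  by (simp add: sum_of_bool_eq Int_def conj_commute)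

lemma sum_of_bool_le: "(\<Sum>w\<in>{1..<u}. of_bool (P w) :: nat) \<le> u - 1"
  using sum_mono[of "{1..<u}" "\<lambda>w. of_bool (P w) :: nat" "\<lambda>_. 1"] by simp

lemma sum_triangle_swap:
  fixes a b :: nat
  shows "(\<Sum>u\<in>{a..<b}. \<Sum>v\<in>{u<..<b}. F u v) = (\<Sum>v\<in>{a..<b}. \<Sum>u\<in>{a..<v}. F u v)"
proof -
  have "(\<Sum>u\<in>{a..<b}. \<Sum>v\<in>{u<..<b}. F u v) = (\<Sum>u\<in>{a..<b}. \<Sum>v\<in>{v. v \<in> {a..<b} \<and> u < v}. F u v)"
    by (intro sum.cong) auto
  also have "\<dots> = (\<Sum>v\<in>{a..<b}. \<Sum>u\<in>{u. u \<in> {a..<b} \<and> u < v}. F u v)"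
    by (rule sum.swap_restrict) simp_all
  also have "\<dots> = (\<Sum>v\<in>{a..<b}. \<Sum>u\<in>{a..<v}. F u v)"
    by (intro sum.cong) auto
  finally show ?thesis .
qed

lemma sum_nested_tail:
  fixes h :: "nat \<Rightarrow> nat"
  shows "(\<Sum>v\<in>{u<..T}. \<Sum>w\<in>{v<..T}. h w) = (\<Sum>w\<in>{u<..T}. (w - u - 1) * h w)"
proof -
  have ivl: "{x<..T} = {Suc x..<Suc T}" "{x<..T} = {x<..<Suc T}" for x by auto
  have "(\<Sum>v\<in>{u<..T}. \<Sum>w\<in>{v<..T}. h w) = (\<Sum>v\<in>{Suc u..<Suc T}. \<Sum>w\<in>{v<..<Suc T}. h w)"
    by (simp only: ivl(2), simp only: ivl(1)[of u] ivl(2)[symmetric])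
  also have "\<dots> = (\<Sum>w\<in>{Suc u..<Suc T}. \<Sum>v\<in>{Suc u..<w}. h w)"
    by (rule sum_triangle_swap)
  finally show ?thesis by (simp add: ivl(1))
qed

lemma sum_insert_Suc_top:
  "u \<le> T \<Longrightarrow> (\<Sum>v\<in>{u<..Suc T}. f v) = (\<Sum>v\<in>{u<..T}. f v) + (f (Suc T) :: nat)"
proof -
  assume "u \<le> T"
  then have "{u<..Suc T} = insert (Suc T) {u<..T}" by auto
  then show ?thesis by simp
qed

lemma sum_pairs_Suc:
  "(\<Sum>u\<in>{1..Suc T}. \<Sum>v\<in>{u<..Suc T}. f u v) =
     (\<Sum>u\<in>{1..T}. (\<Sum>v\<in>{u<..T}. f u v) + (f u (Suc T) :: nat))"
  by (simp add: atLeastAtMostSuc_conv sum_insert_Suc_top)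

lemma sum_diffs_choose2: "(\<Sum>u\<in>{1..T}. T - u) = T choose 2"
proof (induction T)
  case (Suc T)
  have "(\<Sum>u\<in>{1..Suc T}. Suc T - u) = (\<Sum>u\<in>{1..T}. (T - u) + 1)"
    by (simp add: atLeastAtMostSuc_conv Suc_diff_le)
  also have "\<dots> = (\<Sum>u\<in>{1..T}. T - u) + T"
    by (simp only: sum.distrib) simp
  finally show ?case using Suc.IH by (simp add: numeral_2_eq_2)
qed simp

lemma sum_gaps_choose3: "(\<Sum>u\<in>{1..T}. \<Sum>v\<in>{u<..T}. v - u - 1) = T choose 3"
proof (induction T)
  case (Suc T)
  have "(\<Sum>u\<in>{1..Suc T}. \<Sum>v\<in>{u<..Suc T}. v - u - 1) =
      (\<Sum>u\<in>{1..T}. \<Sum>v\<in>{u<..T}. v - u - 1) + (\<Sum>u\<in>{1..T}. T - u)"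
    by (simp only: sum_pairs_Suc sum.distrib) simp
  then show ?case using Suc.IH sum_diffs_choose2[of T] by (simp add: numeral_3_eq_3 numeral_2_eq_2)
qed simp

lemma sum_lessThan_choose2: "(\<Sum>s<T. s) = T choose 2"
  by (induction T) (simp_all add: numeral_2_eq_2)

lemma double_choose2: "2 * (n choose 2) = n * (n - 1)"
  by (induction n) (auto simp: numeral_2_eq_2 algebra_simps)

lemma sum_products_choose3: "(\<Sum>s<T. s * (T - 1 - s)) = T choose 3"
proof (induction T)
  case (Suc T)
  have "s * (T - s) = s * (T - 1 - s) + s" if "s < T" for s
  proof -
    from that have "T - s = Suc (T - 1 - s)" by arith
    then show ?thesis by simp
  qed
  then have "(\<Sum>s<Suc T. s * (Suc T - 1 - s)) = (\<Sum>s<T. s * (T - 1 - s) + s)"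
    by simp
  also have "\<dots> = (T choose 3) + (T choose 2)"
    using Suc.IH by (simp add: sum.distrib sum_lessThan_choose2)
  finally show ?case by (simp add: numeral_3_eq_3 numeral_2_eq_2)
qed simp

lemma choose4_Suc:
  "24 * (Suc (Suc (Suc (Suc m))) choose 4) = Suc (Suc (Suc (Suc m))) * Suc (Suc (Suc m)) * Suc (Suc m) * Suc m"
proof -
  let ?n = "Suc (Suc (Suc (Suc m)))"
  have "(24 * (?n choose 4)) * fact m = (fact 4 * fact m * (?n choose 4) :: nat)"
    by (simp add: fact_numeral)
  also have "\<dots> = fact ?n" using binomial_fact_lemma[of 4 ?n] by (simp add: numeral_eq_Suc)
  also have "\<dots> = (?n * Suc (Suc (Suc m)) * Suc (Suc m) * Suc m) * fact m"
    by (simp only: fact_Suc of_nat_id mult.assoc)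
  finally show ?thesis by (rule mult_right_cancel[THEN iffD1, OF fact_nonzero])
qed

lemma choose4_eq: "24 * (n choose 4) = n * (n - 1) * (n - 2) * (n - 3)"
proof (cases "n < 4")
  case True
  then consider "n = 0" | "n = 1" | "n = 2" | "n = 3" by linarith
  then show ?thesis by cases simp_all
next
  case False
  define m where "m = n - 4"
  have e: "n = Suc (Suc (Suc (Suc m)))" "n - 1 = Suc (Suc (Suc m))" "n - 2 = Suc (Suc m)" "n - 3 = Suc m"
    using False unfolding m_def by arith+
  show ?thesis by (simp only: e(2-4)) (simp only: e(1) choose4_Suc)
qed

lemma double_sum_Suc_minus:
  assumes "k + 1 \<le> T"
  shows "2 * (\<Sum>s<T. Suc k - s) = (k + 1) * (k + 2)"
proof -
  have "(\<Sum>s<T. Suc k - s) = (\<Sum>s<Suc k. Suc k - s)"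
    using assms by (intro sum.mono_neutral_right) auto
  also have "\<dots> = (\<Sum>s<Suc k. Suc (Suc k - Suc s))"
    by (intro sum.cong) auto
  also have "\<dots> = (\<Sum>s<Suc k. Suc s)"
    by (rule sum.nat_diff_reindex)
  also have "\<dots> = (\<Sum>s<Suc k. s + 1)"
    by simp
  also have "\<dots> = (\<Sum>s<Suc k. s) + Suc k"
    by (simp only: sum.distrib) simp
  also have "(\<Sum>s<Suc k. s) = Suc k choose 2"
    by (rule sum_lessThan_choose2)
  finally show ?thesis
    using double_choose2[of "Suc k"] by (simp add: algebra_simps)
qed

lemma double_sum_Suc_minus_const:
  fixes q c :: nat
  shows "2 * (\<Sum>k<q. Suc k - c) = (q - c) * (q - c + 1)"
proof (induction q)
  case (Suc q)
  show ?case
  proof (cases "c \<le> q")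
    case True
    then obtain d where "q = c + d" by (metis le_add_diff_inverse)
    then show ?thesis using Suc.IH by (simp add: algebra_simps Suc_diff_le)
  qed (use Suc.IH in simp)
qed simp

lemma sum_rising_cubes:
  fixes q :: nat
  shows "4 * (\<Sum>k<q. (k + 1) * (k + 2) * (k + 3)) = q * (q + 1) * (q + 2) * (q + 3)"
  by (induction q) (simp_all add: algebra_simps)

lemma sorted_wrt_less_nth_less_iff:
  fixes ys :: "'a::linorder list"
  assumes "sorted_wrt (<) ys" "q < length ys" "r < length ys"
  shows "ys ! q < ys ! r \<longleftrightarrow> q < r"
  using assms by (cases q r rule: linorder_cases) (use sorted_wrt_nth_less[OF assms(1)] in fastforce)+

lemma card_set_filter_nth:
  assumes "distinct ys"
  shows "card {w \<in> set ys. P w} = card {q \<in> {..<length ys}. P (ys ! q)}"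
proof -
  have "{w \<in> set ys. P w} = (!) ys ` {q \<in> {..<length ys}. P (ys ! q)}"
    by (auto simp: in_set_conv_nth)
  moreover have "inj_on ((!) ys) {q \<in> {..<length ys}. P (ys ! q)}"
    using assms by (intro inj_on_nth) auto
  ultimately show ?thesis by (simp add: card_image)
qed

lemma card_set_less_nth:
  fixes ys :: "'a::linorder list"
  assumes "sorted_wrt (<) ys" "r < length ys"
  shows "card {w \<in> set ys. w < ys ! r} = r"
proof -
  have "{q \<in> {..<length ys}. ys ! q < ys ! r} = {..<r}"
    using assms sorted_wrt_less_nth_less_iff[OF assms(1) _ assms(2)] by auto
  then show ?thesis
    using assms card_set_filter_nth[of ys] by (simp add: strict_sorted_iff)
qed

lemma card_set_greater_nth:
  fixes ys :: "'a::linorder list"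
  assumes "sorted_wrt (<) ys" "r < length ys"
  shows "card {w \<in> set ys. ys ! r < w} = length ys - 1 - r"
proof -
  have "{q \<in> {..<length ys}. ys ! r < ys ! q} = {r<..<length ys}"
    using assms sorted_wrt_less_nth_less_iff[OF assms(1) assms(2)] by auto
  then show ?thesis
    using assms card_set_filter_nth[of ys] by (simp add: strict_sorted_iff)
qed

section \<open>Side counts and the crossing identity\<close>

definition side_count :: "(nat \<Rightarrow> nat \<Rightarrow> bool) \<Rightarrow> nat \<Rightarrow> nat \<Rightarrow> nat \<Rightarrow> bool \<Rightarrow> nat" where
  "side_count B T u v c =
     (\<Sum>w\<in>{1..<u}. of_bool (B w v \<noteq> c)) + (if B u v = c then v - u - 1 else 0)
     + (\<Sum>w\<in>{v<..T}. of_bool (B u w \<noteq> c))"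

lemma side_count_compl:
  assumes "1 \<le> u" "u < v" "v \<le> T"
  shows "side_count B T u v c + side_count B T u v (\<not> c) = T - 2"
  using assms sum_of_bool_compl[of "{1..<u}" "\<lambda>w. B w v" c] sum_of_bool_compl[of "{v<..T}" "B u" c]
  unfolding side_count_def by auto

lemma side_count_Suc:
  "v \<le> T \<Longrightarrow> side_count B (Suc T) u v c = side_count B T u v c + of_bool (B u (Suc T) \<noteq> c)"
  unfolding side_count_def by (simp add: sum_insert_Suc_top)

lemma crossings_as_sum:
  "crossings T B = (\<Sum>i\<in>{1..T}. \<Sum>j\<in>{i<..T}. \<Sum>k\<in>{i<..<j}. card {l\<in>{j<..T}. B i j = B k l})"
proof -
  have "{(i, j, k, l). 1 \<le> i \<and> i < k \<and> k < j \<and> j < l \<and> l \<le> T \<and> B i j = B k l}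
    = Sigma {1..T} (\<lambda>i. Sigma {i<..T} (\<lambda>j. Sigma {i<..<j} (\<lambda>k. {l\<in>{j<..T}. B i j = B k l})))"
    by auto
  then show ?thesis
    unfolding crossings_def by (simp add: card_SigmaI)
qed

definition new_crossings :: "(nat \<Rightarrow> nat \<Rightarrow> bool) \<Rightarrow> nat \<Rightarrow> nat" where
  "new_crossings B T = (\<Sum>i\<in>{1..T}. \<Sum>j\<in>{i<..T}. \<Sum>k\<in>{i<..<j}. of_bool (B i j = B k (Suc T)))"

lemma crossings_Suc: "crossings (Suc T) B = crossings T B + new_crossings B T"
proof -
  have "card {l\<in>{j<..Suc T}. B i j = B k l} = card {l\<in>{j<..T}. B i j = B k l} + of_bool (B i j = B k (Suc T))"
    if "j \<le> T" for i j k
    using sum_insert_Suc_top[OF that, of "\<lambda>l. of_bool (B i j = B k l)"] by (simp add: sum_of_bool_card)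
  then show ?thesis
    unfolding crossings_as_sum new_crossings_def sum_pairs_Suc by (simp add: sum.distrib)
qed

lemma new_crossings_plus_side_counts:
  "new_crossings B T + (\<Sum>u\<in>{1..T}. \<Sum>v\<in>{u<..T}. side_count B T u v (B u (Suc T))) = 2 * (T choose 3)"
proof -
  let ?x = "\<lambda>u. B u (Suc T)"
  have ivl: "{1..T} = {1..<Suc T}" "\<And>u. {u<..T} = {u<..<Suc T}" by auto
  have left: "(\<Sum>u\<in>{1..T}. \<Sum>v\<in>{u<..T}. \<Sum>w\<in>{1..<u}. of_bool (B w v \<noteq> ?x u))
     = (\<Sum>w\<in>{1..T}. \<Sum>v\<in>{w<..T}. \<Sum>u\<in>{w<..<v}. of_bool (B w v \<noteq> ?x u) :: nat)"
    unfolding ivl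
    by (simp only: sum_triangle_swap)
  have right: "(\<Sum>v\<in>{u<..T}. \<Sum>w\<in>{v<..T}. of_bool (B u w \<noteq> ?x u))
     = (\<Sum>w\<in>{u<..T}. (w - u - 1) * of_bool (B u w \<noteq> ?x u) :: nat)" for u
    by (rule sum_nested_tail)
  have "new_crossings B T + (\<Sum>w\<in>{1..T}. \<Sum>v\<in>{w<..T}. \<Sum>u\<in>{w<..<v}. of_bool (B w v \<noteq> ?x u))
      = (\<Sum>w\<in>{1..T}. \<Sum>v\<in>{w<..T}. v - w - 1)"
    unfolding new_crossings_def sum.distrib[symmetric]
    by (intro sum.cong refl) (subst sum_of_bool_add_not, simp_all)
  moreover have "(\<Sum>u\<in>{1..T}. \<Sum>v\<in>{u<..T}. (if B u v = ?x u then v - u - 1 else 0))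
      + (\<Sum>u\<in>{1..T}. \<Sum>w\<in>{u<..T}. (w - u - 1) * of_bool (B u w \<noteq> ?x u))
      = (\<Sum>u\<in>{1..T}. \<Sum>v\<in>{u<..T}. v - u - 1)"
    unfolding sum.distrib[symmetric] by (intro sum.cong refl) auto
  ultimately show ?thesis
    unfolding side_count_def sum.distrib left right sum_gaps_choose3 by simp
qed

lemma sum_by_prefix_counts:
  fixes x :: "nat \<Rightarrow> bool" and f g :: "nat \<Rightarrow> nat"
  defines "p \<equiv> \<lambda>u. (\<Sum>w\<in>{1..<u}. of_bool (x w) :: nat)"
      and "r \<equiv> \<lambda>u. (\<Sum>w\<in>{1..<u}. of_bool (\<not> x w) :: nat)"
  shows "(\<Sum>u\<in>{1..m}. if x u then f (p u) else g (r u)) = (\<Sum>s<p (Suc m). f s) + (\<Sum>s<r (Suc m). g s)"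
proof (induction m)
  case (Suc m)
  have "p (Suc (Suc m)) = p (Suc m) + of_bool (x (Suc m))"
       "r (Suc (Suc m)) = r (Suc m) + of_bool (\<not> x (Suc m))"
    unfolding p_def r_def by (simp_all add: atLeastLessThanSuc)
  with Suc.IH show ?case by (auto simp: atLeastAtMostSuc_conv)
qed (simp add: p_def r_def)

text \<open>The side counts of the edges u(T+1), u = 1..T, run through 0, ..., T-1 exactly once:
  a blue edge takes the number of earlier blue ones, a red edge T-1 minus the number of
  earlier red ones.\<close>

lemma sum_side_count_last:
  fixes f :: "nat \<Rightarrow> nat"
  shows "(\<Sum>u\<in>{1..T}. f (side_count B (Suc T) u (Suc T) False)) = (\<Sum>s<T. f s)"
proof -
  let ?x = "\<lambda>w. B w (Suc T)"
  define p where "p = (\<lambda>u. (\<Sum>w\<in>{1..<u}. of_bool (?x w) :: nat))"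
  define r where "r = (\<lambda>u. (\<Sum>w\<in>{1..<u}. of_bool (\<not> ?x w) :: nat))"
  have pr: "p u + r u = u - 1" for u
    using sum_of_bool_compl[of "{1..<u}" ?x False] unfolding p_def r_def by simp
  have "side_count B (Suc T) u (Suc T) False = (if ?x u then p u else T - 1 - r u)" if "u \<in> {1..T}" for u
    using pr[of u] that unfolding side_count_def p_def by auto
  then have "(\<Sum>u\<in>{1..T}. f (side_count B (Suc T) u (Suc T) False))
      = (\<Sum>u\<in>{1..T}. if ?x u then f (p u) else (\<lambda>s. f (T - 1 - s)) (r u))"
    by (intro sum.cong) auto
  also have "\<dots> = (\<Sum>s<p (Suc T). f s) + (\<Sum>s<r (Suc T). f (T - 1 - s))"
    unfolding p_def r_def by (rule sum_by_prefix_counts)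
  also have "(\<Sum>s<r (Suc T). f (T - 1 - s)) = (\<Sum>s\<in>{p (Suc T)..<T}. f s)"
    using pr[of "Suc T"]
    by (intro sum.reindex_bij_witness[where i="\<lambda>s. T - 1 - s" and j="\<lambda>s. T - 1 - s"]) auto
  also have "(\<Sum>s<p (Suc T). f s) + \<dots> = (\<Sum>s<T. f s)"
    using pr[of "Suc T"] by (simp add: lessThan_atLeast0 sum.atLeastLessThan_concat)
  finally show ?thesis .
qed

definition side_products :: "(nat \<Rightarrow> nat \<Rightarrow> bool) \<Rightarrow> nat \<Rightarrow> nat" where
  "side_products B T = (\<Sum>u\<in>{1..T}. \<Sum>v\<in>{u<..T}. side_count B T u v False * side_count B T u v True)"

lemma side_count_last_True:
  "1 \<le> u \<Longrightarrow> u \<le> T \<Longrightarrow> side_count B (Suc T) u (Suc T) True = T - 1 - side_count B (Suc T) u (Suc T) False"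
  using side_count_compl[of u "Suc T" "Suc T" B False] by simp

lemma side_products_Suc:
  "side_products B (Suc T) = side_products B T
     + (\<Sum>u\<in>{1..T}. \<Sum>v\<in>{u<..T}. side_count B T u v (B u (Suc T))) + (T choose 3)"
proof -
  have step: "side_count B (Suc T) u v False * side_count B (Suc T) u v True
      = side_count B T u v False * side_count B T u v True + side_count B T u v (B u (Suc T))"
    if "v \<le> T" for u v
    using that by (simp add: side_count_Suc)
  have "(\<Sum>u\<in>{1..T}. side_count B (Suc T) u (Suc T) False * side_count B (Suc T) u (Suc T) True)
      = (\<Sum>u\<in>{1..T}. (\<lambda>s. s * (T - 1 - s)) (side_count B (Suc T) u (Suc T) False))"
    by (intro sum.cong) (auto simp: side_count_last_True)
  also have "\<dots> = (\<Sum>s<T. s * (T - 1 - s))"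
    using sum_side_count_last[where f="\<lambda>s. s * (T - 1 - s)"] by simp
  also have "\<dots> = T choose 3"
    by (rule sum_products_choose3)
  finally show ?thesis
    unfolding side_products_def sum_pairs_Suc by (simp add: step sum.distrib)
qed

text \<open>The analogue for side counts of the k-edge identity
  cr = 3 C(T,4) - \<Sum> k (T - 2 - k) E_k.\<close>

lemma crossings_plus_side_products: "crossings T B + side_products B T = 3 * (T choose 4)"
proof (induction T)
  case (Suc T)
  then show ?case
    using crossings_Suc[of T B] side_products_Suc[of B T] new_crossings_plus_side_counts[of B T]
    by (simp add: numeral_3_eq_3 numeral_2_eq_2 eval_nat_numeral)
qed (simp add: side_products_def crossings_as_sum)

section \<open>Deficits\<close>

definition side_min :: "(nat \<Rightarrow> nat \<Rightarrow> bool) \<Rightarrow> nat \<Rightarrow> nat \<Rightarrow> nat \<Rightarrow> nat" where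
  "side_min B T u v = min (side_count B T u v False) (side_count B T u v True)"

definition deficit :: "(nat \<Rightarrow> nat \<Rightarrow> bool) \<Rightarrow> nat \<Rightarrow> nat \<Rightarrow> nat" where
  "deficit B T k = (\<Sum>u\<in>{1..T}. \<Sum>v\<in>{u<..T}. k - side_min B T u v)"

definition low_edges :: "(nat \<Rightarrow> nat \<Rightarrow> bool) \<Rightarrow> nat \<Rightarrow> nat \<Rightarrow> nat \<Rightarrow> nat" where
  "low_edges B T k u = card {v \<in> {u<..T}. side_count B T u v (B u (Suc T)) \<le> k}"

lemma side_min_Suc:
  assumes "1 \<le> u" "u < v" "v \<le> T" "2 * k + 2 \<le> T"
  shows "Suc k - side_min B (Suc T) u v = (k - side_min B T u v) + of_bool (side_count B T u v (B u (Suc T)) \<le> k)"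
  using assms side_count_compl[of u v T B False] side_count_Suc[of v T B u False] side_count_Suc[of v T B u True]
  unfolding side_min_def by (cases "B u (Suc T)") auto

lemma sum_side_min_last:
  assumes "2 * k + 2 \<le> T"
  shows "(\<Sum>u\<in>{1..T}. Suc k - side_min B (Suc T) u (Suc T)) = (k + 1) * (k + 2)"
proof -
  have "(\<Sum>u\<in>{1..T}. Suc k - side_min B (Suc T) u (Suc T))
      = (\<Sum>u\<in>{1..T}. (\<lambda>s. Suc k - min s (T - 1 - s)) (side_count B (Suc T) u (Suc T) False))"
    by (intro sum.cong) (auto simp: side_min_def side_count_last_True)
  also have "\<dots> = (\<Sum>s<T. Suc k - min s (T - 1 - s))"
    by (rule sum_side_count_last)
  also have "\<dots> = (\<Sum>s<T. (Suc k - s) + (Suc k - (T - Suc s)))"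
    using assms by (intro sum.cong) auto
  also have "\<dots> = (\<Sum>s<T. Suc k - s) + (\<Sum>s<T. Suc k - (T - Suc s))"
    by (rule sum.distrib)
  also have "(\<Sum>s<T. Suc k - (T - Suc s)) = (\<Sum>s<T. Suc k - s)"
    by (rule sum.nat_diff_reindex)
  finally show ?thesis
    using double_sum_Suc_minus[of k T] assms by simp
qed

lemma deficit_Suc:
  assumes "2 * k + 2 \<le> T"
  shows "deficit B (Suc T) (Suc k) = (k + 1) * (k + 2) + deficit B T k + (\<Sum>u\<in>{1..T}. low_edges B T k u)"
proof -
  have "(\<Sum>v\<in>{u<..T}. Suc k - side_min B (Suc T) u v) = (\<Sum>v\<in>{u<..T}. k - side_min B T u v) + low_edges B T k u"
    if "u \<in> {1..T}" for u
  proof -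
    have "(\<Sum>v\<in>{u<..T}. Suc k - side_min B (Suc T) u v)
        = (\<Sum>v\<in>{u<..T}. (k - side_min B T u v) + of_bool (side_count B T u v (B u (Suc T)) \<le> k))"
      using that assms side_min_Suc[of u _ T k B] by (intro sum.cong) auto
    then show ?thesis
      by (simp only: sum.distrib low_edges_def sum_of_bool_card finite_greaterThanAtMost)
  qed
  then show ?thesis
    using sum_side_min_last[OF assms, of B]
    unfolding deficit_def sum_pairs_Suc by (simp add: sum.distrib)
qed

lemma distinct_assoc_order: "distinct (assoc_order B i j)"
  unfolding assoc_order_def by (auto simp: distinct_filter)

lemma set_assoc_order: "set (assoc_order B i j) = {i<..<j}"
  unfolding assoc_order_def by auto

lemma length_assoc_order: "length (assoc_order B i j) = j - i - 1"
  using sum_length_filter_compl[of "\<lambda>l. B i l \<noteq> B i j" "[i+1..<j]"]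
  unfolding assoc_order_def by (simp add: rev_filter[symmetric])

text \<open>The column l is preceded in the order associated to (i,j) by the columns right of it
  having the other colour and, if l has the colour of (i,j), by all columns between i and l.\<close>

definition assoc_position :: "(nat \<Rightarrow> nat \<Rightarrow> bool) \<Rightarrow> nat \<Rightarrow> nat \<Rightarrow> nat \<Rightarrow> nat" where
  "assoc_position B i j l =
     (if B i l = B i j then l - i - 1 else 0) + (\<Sum>w\<in>{l<..<j}. of_bool (B i w \<noteq> B i j))"

lemma assoc_position_nth:
  assumes "p < length (assoc_order B i j)"
  shows "assoc_position B i j (assoc_order B i j ! p) = p"
proof -
  let ?P = "\<lambda>l. B i l \<noteq> B i j"
  define ys where "ys = filter ?P [i+1..<j]"
  define zs where "zs = filter (\<lambda>l. \<not> ?P l) [i+1..<j]"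
  have order: "assoc_order B i j = rev ys @ zs"
    unfolding assoc_order_def ys_def zs_def by (simp add: rev_filter)
  have sorted: "sorted_wrt (<) ys" "sorted_wrt (<) zs"
    unfolding ys_def zs_def by (simp_all add: sorted_wrt_filter)
  have set_ys: "set ys = {w \<in> {i<..<j}. ?P w}" and set_zs: "set zs = {w \<in> {i<..<j}. \<not> ?P w}"
    unfolding ys_def zs_def by auto
  have later: "(\<Sum>w\<in>{l<..<j}. of_bool (?P w)) = card {w \<in> set ys. l < w}" if "i < l" for l
  proof -
    have "{w \<in> {l<..<j}. ?P w} = {w \<in> set ys. l < w}"
      using that by (auto simp: set_ys)
    then show ?thesis by (simp add: sum_of_bool_card)
  qed
  show ?thesis
  proof (cases "p < length ys")
    case True
    define r where "r = length ys - 1 - p"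
    with True have r: "r < length ys" and l: "assoc_order B i j ! p = ys ! r"
      by (simp_all add: order nth_append rev_nth)
    from r have "ys ! r \<in> set ys" by simp
    then have "?P (ys ! r)" "i < ys ! r" by (auto simp: set_ys)
    then have "assoc_position B i j (ys ! r) = (\<Sum>w\<in>{ys ! r<..<j}. of_bool (?P w))"
      unfolding assoc_position_def by simp
    also have "\<dots> = card {w \<in> set ys. ys ! r < w}"
      using later \<open>i < ys ! r\<close> .
    also have "\<dots> = p"
      using card_set_greater_nth[OF sorted(1) r] True by (simp add: r_def)
    finally show ?thesis by (simp add: l)
  next
    case False
    define r where "r = p - length ys"
    with False assms have r: "r < length zs" and l: "assoc_order B i j ! p = zs ! r"
      by (simp_all add: order nth_append)
    let ?l = "zs ! r"
    from r have "?l \<in> set zs" by simp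
    then have l_props: "\<not> ?P ?l" "i < ?l" "?l < j" by (auto simp: set_zs)
    have "card {w \<in> set ys. w < ?l} + card {w \<in> set zs. w < ?l} = ?l - i - 1"
    proof -
      have "{w \<in> set ys. w < ?l} = {w \<in> {i<..<?l}. ?P w}" "{w \<in> set zs. w < ?l} = {w \<in> {i<..<?l}. \<not> ?P w}"
        using l_props(3) by (auto simp: set_ys set_zs)
      then have "card {w \<in> set ys. w < ?l} + card {w \<in> set zs. w < ?l}
          = (\<Sum>w\<in>{i<..<?l}. of_bool (?P w) + of_bool (\<not> ?P w))"
        by (simp only: sum.distrib sum_of_bool_card finite_greaterThanLessThan)
      also have "\<dots> = card {i<..<?l}"
        by (rule sum_of_bool_add_not) simp
      finally show ?thesis by simp
    qed
    moreover have "card {w \<in> set ys. w < ?l} + card {w \<in> set ys. ?l < w} = length ys"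
    proof -
      have "w \<noteq> ?l" if "w \<in> set ys" for w
        using that l_props(1) by (auto simp: set_ys)
      then have "set ys = {w \<in> set ys. w < ?l} \<union> {w \<in> set ys. ?l < w}"
        by (auto simp: neq_iff)
      moreover have "{w \<in> set ys. w < ?l} \<inter> {w \<in> set ys. ?l < w} = {}"
        by auto
      ultimately have "card (set ys) = card {w \<in> set ys. w < ?l} + card {w \<in> set ys. ?l < w}"
        by (metis card_Un_disjoint finite_set finite_Un)
      then show ?thesis using sorted(1) by (simp add: distinct_card strict_sorted_iff)
    qed
    moreover have "assoc_position B i j ?l = (?l - i - 1) + (\<Sum>w\<in>{?l<..<j}. of_bool (?P w))"
      using l_props(1) unfolding assoc_position_def by simp
    moreover note later[OF l_props(2)] card_set_less_nth[OF sorted(2) r]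
    ultimately show ?thesis
      using False unfolding l r_def by linarith
  qed
qed

lemma side_count_eq_above_plus_position:
  assumes "u < v" "v \<le> T"
  shows "side_count B T u v (B u (Suc T))
           = (\<Sum>w\<in>{1..<u}. of_bool (B w v \<noteq> B u (Suc T))) + assoc_position B u (Suc T) v"
proof -
  from assms have "{v<..T} = {v<..<Suc T}" by auto
  then show ?thesis unfolding side_count_def assoc_position_def by simp
qed

text \<open>The first k + 2 - u columns of the order associated to (u, T+1) have side count at most k,
  since an entry has at most u - 1 entries above it.\<close>

lemma card_low_positions_le_low_edges:
  assumes "1 \<le> u" "u \<le> T" "k + 2 \<le> T"
    and Q: "\<forall>q\<in>Q. q < length (assoc_order B u (Suc T))
             \<and> side_count B T u (assoc_order B u (Suc T) ! q) (B u (Suc T)) \<le> k"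
  shows "card ({..<k + 2 - u} \<union> Q) \<le> low_edges B T k u"
proof -
  let ?xs = "assoc_order B u (Suc T)"
  let ?I = "{..<k + 2 - u} \<union> Q"
  have I_less: "\<forall>q\<in>?I. q < length ?xs"
    using assms by (auto simp: length_assoc_order)
  have "(!) ?xs ` ?I \<subseteq> {v \<in> {u<..T}. side_count B T u v (B u (Suc T)) \<le> k}"
  proof
    fix v assume "v \<in> (!) ?xs ` ?I"
    then obtain p where p: "p \<in> ?I" "v = ?xs ! p" by auto
    with I_less have p_less: "p < length ?xs" by blast
    with p have uv: "u < v" "v \<le> T"
      using nth_mem[OF p_less] by (auto simp: set_assoc_order)
    have "side_count B T u v (B u (Suc T)) \<le> k"
    proof (cases "p \<in> Q")
      case False
      with p have "p < k + 2 - u" by auto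
      moreover have "side_count B T u v (B u (Suc T)) \<le> (u - 1) + p"
        using side_count_eq_above_plus_position[OF uv, of B] assoc_position_nth[OF p_less] p(2)
          sum_of_bool_le[of "\<lambda>w. B w v \<noteq> B u (Suc T)" u] by simp
      ultimately show ?thesis using assms(1) by linarith
    qed (use Q p in auto)
    with uv show "v \<in> {v \<in> {u<..T}. side_count B T u v (B u (Suc T)) \<le> k}" by auto
  qed
  moreover have "inj_on ((!) ?xs) ?I"
    using I_less by (intro inj_on_nth distinct_assoc_order)
  ultimately show ?thesis
    unfolding low_edges_def by (simp add: card_image[symmetric] card_mono)
qed

lemma double_sum_row_bounds:
  fixes k T :: nat
  shows "k + 1 \<le> T \<Longrightarrow> 2 * (\<Sum>u\<in>{1..T}. k + 2 - u) = (k + 1) * (k + 2)"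
  using double_sum_Suc_minus[of k T] by (simp add: sum.atLeast1_atMost_eq)

lemma sum_low_edges_lower:
  assumes "2 * k + 2 \<le> T"
  shows "(k + 1) * (k + 2) \<le> 2 * (\<Sum>u\<in>{1..T}. low_edges B T k u)"
proof -
  have "(\<Sum>u\<in>{1..T}. k + 2 - u) \<le> (\<Sum>u\<in>{1..T}. low_edges B T k u)"
    using assms card_low_positions_le_low_edges[of _ T k "{}" B] by (intro sum_mono) auto
  then show ?thesis using double_sum_row_bounds[of k T] assms by simp
qed

text \<open>If the lower bound is attained, every row u attains its bound k + 2 - u.\<close>

lemma position_lt_if_low_edges_tight:
  assumes "2 * k + 2 \<le> T" "2 * (\<Sum>u\<in>{1..T}. low_edges B T k u) = (k + 1) * (k + 2)"
    and "1 \<le> u" "u \<le> T" "q < length (assoc_order B u (Suc T))"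
    and "side_count B T u (assoc_order B u (Suc T) ! q) (B u (Suc T)) \<le> k"
  shows "q < k + 2 - u"
proof (rule ccontr)
  assume "\<not> q < k + 2 - u"
  then have "Suc (k + 2 - u) \<le> low_edges B T k u"
    using card_low_positions_le_low_edges[of u T k "{q}" B] assms by simp
  moreover have "k + 2 - u = low_edges B T k u"
  proof (rule sum_mono_inv[where f="\<lambda>u. k + 2 - u"])
    show "(\<Sum>u\<in>{1..T}. k + 2 - u) = (\<Sum>u\<in>{1..T}. low_edges B T k u)"
      using assms(1,2) double_sum_row_bounds[of k T] by simp
    show "k + 2 - x \<le> low_edges B T k x" if "x \<in> {1..T}" for x
      using that assms(1) card_low_positions_le_low_edges[of x T k "{}" B] by simp
  qed (use assms in auto)
  ultimately show False by simp
qed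

lemma deficit_lower: "2 * k + 1 \<le> T \<Longrightarrow> k * (k + 1) * (k + 2) \<le> 2 * deficit B T k"
proof (induction k arbitrary: T)
  case (Suc k)
  then obtain T' where T: "T = Suc T'" and k: "2 * k + 2 \<le> T'"
    by (cases T) auto
  show ?case
    using deficit_Suc[OF k, of B] Suc.IH[of T'] sum_low_edges_lower[OF k, of B] k
    by (simp add: T algebra_simps)
qed simp

lemma deficit_tight_descent:
  assumes k: "2 * k + 2 \<le> T"
    and tight: "2 * deficit B (Suc T) (Suc k) = (k + 1) * (k + 2) * (k + 3)"
  shows "2 * deficit B T k = k * (k + 1) * (k + 2)"
    and "2 * (\<Sum>u\<in>{1..T}. low_edges B T k u) = (k + 1) * (k + 2)"
proof -
  have "(k + 1) * (k + 2) * (k + 3) = 2 * (k + 1) * (k + 2) + k * (k + 1) * (k + 2) + (k + 1) * (k + 2)"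
    by (simp add: algebra_simps)
  moreover note deficit_Suc[OF k, of B] tight deficit_lower[of k T B] sum_low_edges_lower[OF k, of B] k
  ultimately show "2 * deficit B T k = k * (k + 1) * (k + 2)"
    and "2 * (\<Sum>u\<in>{1..T}. low_edges B T k u) = (k + 1) * (k + 2)"
    by linarith+
qed

section \<open>Crossing-optimal drawings\<close>

lemma side_identity_odd:
  fixes a b q :: nat
  assumes "a + b = 2 * q + 1"
  shows "a * b + (q - min a b) * (q - min a b + 1) = q * (q + 1)"
proof -
  have *: "x * y + (q - x) * (q - x + 1) = q * (q + 1)" if "x \<le> y" "x + y = 2 * q + 1" for x y :: nat
  proof -
    from that have "x \<le> q" by linarith
    then obtain d where d: "q = x + d" using le_Suc_ex by blast
    with that have "y = x + 2 * d + 1" by linarith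
    with d show ?thesis by (simp add: algebra_simps)
  qed
  show ?thesis
    using *[of a b] *[of b a] assms by (cases "a \<le> b") (simp_all add: min_def mult.commute)
qed

lemma side_identity_even:
  fixes a b q :: nat
  assumes "a + b = 2 * q + 2"
  shows "a * b + (q - min a b) * (q - min a b + 1) + (Suc q - min a b) = (q + 1) * (q + 1)"
proof -
  have *: "x * y + (q - x) * (q - x + 1) + (Suc q - x) = (q + 1) * (q + 1)"
    if "x \<le> y" "x + y = 2 * q + 2" for x y :: nat
  proof (cases "x = q + 1")
    case False
    with that have "x \<le> q" by linarith
    then obtain d where d: "q = x + d" using le_Suc_ex by blast
    with that have "y = x + 2 * d + 2" by linarith
    with d show ?thesis by (simp add: algebra_simps Suc_diff_le)
  qed (use that in simp)
  show ?thesis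
    using *[of a b] *[of b a] assms by (cases "a \<le> b") (simp_all add: min_def mult.commute)
qed

lemma sum_deficits_swap:
  "(\<Sum>k<q. 2 * deficit B n (Suc k)) = (\<Sum>u\<in>{1..n}. \<Sum>v\<in>{u<..n}. 2 * (\<Sum>k<q. Suc k - side_min B n u v))"
  unfolding deficit_def sum_distrib_left
  by (subst sum.swap, rule sum.cong[OF refl], subst sum.swap) (simp add: sum_distrib_left)

lemma sum_pairs_const: "(\<Sum>u\<in>{1..n}. \<Sum>v\<in>{u<..n}. c) = (n choose 2) * (c :: nat)"
  using sum_diffs_choose2[of n] by (simp add: sum_distrib_right[symmetric])

lemma side_products_plus_deficits_odd:
  assumes "n = 2 * q + 3"
  shows "side_products B n + (\<Sum>k<q. 2 * deficit B n (Suc k)) = (n choose 2) * (q * (q + 1))"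
proof -
  have "side_count B n u v False * side_count B n u v True + 2 * (\<Sum>k<q. Suc k - side_min B n u v)
      = q * (q + 1)" if "u \<in> {1..n}" "v \<in> {u<..n}" for u v
    using that assms side_count_compl[of u v n B False]
    unfolding double_sum_Suc_minus_const side_min_def by (intro side_identity_odd) simp
  then show ?thesis
    unfolding sum_deficits_swap side_products_def sum.distrib[symmetric] sum_pairs_const[symmetric]
    by (intro sum.cong refl) simp
qed

lemma side_products_plus_deficits_even:
  assumes "n = 2 * q + 4"
  shows "side_products B n + (\<Sum>k<q. 2 * deficit B n (Suc k)) + deficit B n (Suc q)
           = (n choose 2) * ((q + 1) * (q + 1))"
proof -
  have "side_count B n u v False * side_count B n u v True + 2 * (\<Sum>k<q. Suc k - side_min B n u v)
        + (Suc q - side_min B n u v) = (q + 1) * (q + 1)" if "u \<in> {1..n}" "v \<in> {u<..n}" for u v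
    using that assms side_count_compl[of u v n B False]
    unfolding double_sum_Suc_minus_const side_min_def by (intro side_identity_even) simp
  then show ?thesis
    unfolding sum_deficits_swap
    unfolding side_products_def deficit_def sum.distrib[symmetric] sum_pairs_const[symmetric]
    by (intro sum.cong refl) simp
qed

lemma Z_odd: "4 * Z (2 * q + 3) = (q * (q + 1)) * (q * (q + 1))"
proof -
  have "even (q * (q + 1))" by simp
  then obtain t where t: "q * (q + 1) = 2 * t" by blast
  have "(q + 1) * (q + 1) * q * q = (q * (q + 1)) * (q * (q + 1))" by algebra
  also have "\<dots> = 4 * (t * t)" unfolding t by algebra
  finally show ?thesis using t unfolding Z_def by simp
qed

lemma Z_even: "4 * Z (2 * q + 4) = (q + 2) * (q + 1) * (q + 1) * q"
proof -
  have "4 dvd ((q + 2) * (q + 1) * (q + 1) * q)"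
  proof (cases "even q")
    case True
    then obtain t where "q = 2 * t" by blast
    then show ?thesis by (intro dvdI[of _ _ "(t + 1) * (2 * t + 1) * (2 * t + 1) * t"]) (simp add: algebra_simps)
  next
    case False
    then obtain t where "q = 2 * t + 1" using oddE by blast
    then show ?thesis by (intro dvdI[of _ _ "(2 * t + 3) * (t + 1) * (t + 1) * (2 * t + 1)"]) (simp add: algebra_simps)
  qed
  then show ?thesis unfolding Z_def by simp
qed

lemma optimal_deficit_sum_odd:
  assumes cr: "crossings n B = Z n" and n: "n = 2 * q + 3"
  shows "(\<Sum>k<q. 2 * deficit B n (Suc k)) = (\<Sum>k<q. (k + 1) * (k + 2) * (k + 3))"
proof -
  have c2: "n choose 2 = (2 * q + 3) * (q + 1)"
    using double_choose2[of n] n by (simp add: algebra_simps)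
  have sub: "n - 1 = 2 * q + 2" "n - 2 = 2 * q + 1" "n - 3 = 2 * q"
    using n by simp_all
  have "8 * ((n choose 2) * (q * (q + 1))) + 2 * (4 * Z n)
      = 2 * (4 * (\<Sum>k<q. (k + 1) * (k + 2) * (k + 3))) + 24 * (n choose 4)"
    unfolding c2 choose4_eq sub sum_rising_cubes Z_odd[of q, folded n] unfolding n by algebra
  then show ?thesis
    using crossings_plus_side_products[of n B] side_products_plus_deficits_odd[OF n, of B] cr
    by linarith
qed

lemma optimal_deficit_sum_even:
  assumes cr: "crossings n B = Z n" and n: "n = 2 * q + 4"
  shows "2 * (\<Sum>k<q. 2 * deficit B n (Suc k)) + 2 * deficit B n (Suc q)
           = 2 * (\<Sum>k<q. (k + 1) * (k + 2) * (k + 3)) + (q + 1) * (q + 2) * (q + 3)"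
proof -
  have c2: "n choose 2 = (q + 2) * (2 * q + 3)"
    using double_choose2[of n] n by (simp add: algebra_simps)
  have sub: "n - 1 = 2 * q + 3" "n - 2 = 2 * q + 2" "n - 3 = 2 * q + 1"
    using n by simp_all
  have "8 * ((n choose 2) * ((q + 1) * (q + 1))) + 2 * (4 * Z n)
      = 2 * (4 * (\<Sum>k<q. (k + 1) * (k + 2) * (k + 3))) + 4 * ((q + 1) * (q + 2) * (q + 3)) + 24 * (n choose 4)"
    unfolding c2 choose4_eq sub sum_rising_cubes Z_even[of q, folded n] unfolding n by algebra
  then show ?thesis
    using crossings_plus_side_products[of n B] side_products_plus_deficits_even[OF n, of B] cr
    by linarith
qed

lemma deficit_tight_if_optimal:
  assumes cr: "crossings n B = Z n" and k: "2 * k + 4 \<le> n"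
  shows "2 * deficit B n (Suc k) = (k + 1) * (k + 2) * (k + 3)"
proof -
  define q where "q = (n - 3) div 2"
  have lower: "(k + 1) * (k + 2) * (k + 3) \<le> 2 * deficit B n (Suc k)" if "2 * k + 3 \<le> n" for k
    using deficit_lower[of "Suc k" n B] that by (simp add: algebra_simps)
  show ?thesis
  proof (cases "even n")
    case False
    with k have n: "n = 2 * q + 3" unfolding q_def by presburger
    have "(k + 1) * (k + 2) * (k + 3) = 2 * deficit B n (Suc k)"
      by (rule sum_mono_inv[OF optimal_deficit_sum_odd[OF cr n, symmetric]]) (use k n lower in auto)
    then show ?thesis by simp
  next
    case True
    with k have n: "n = 2 * q + 4" unfolding q_def by presburger
    have "(\<Sum>k<q. (k + 1) * (k + 2) * (k + 3)) \<le> (\<Sum>k<q. 2 * deficit B n (Suc k))"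
      using n lower by (intro sum_mono) auto
    with optimal_deficit_sum_even[OF cr n] lower[of q] n
    have sums: "(\<Sum>k<q. 2 * deficit B n (Suc k)) = (\<Sum>k<q. (k + 1) * (k + 2) * (k + 3))"
      and top: "2 * deficit B n (Suc q) = (q + 1) * (q + 2) * (q + 3)"
      by linarith+
    show ?thesis
    proof (cases "k < q")
      case True
      have "(k + 1) * (k + 2) * (k + 3) = 2 * deficit B n (Suc k)"
        by (rule sum_mono_inv[OF sums[symmetric]]) (use True n lower in auto)
      then show ?thesis by simp
    next
      case False
      with k n have "k = q" by linarith
      with top show ?thesis by simp
    qed
  qed
qed

lemma deficit_tight_below:
  assumes cr: "crossings n B = Z n"
  shows "2 * (k + s) + 4 \<le> n \<Longrightarrow> 2 * deficit B (n - s) (Suc k) = (k + 1) * (k + 2) * (k + 3)"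
proof (induction s arbitrary: k)
  case 0
  then show ?case using deficit_tight_if_optimal[OF cr, of k] by simp
next
  case (Suc s)
  have shift: "n - s = Suc (n - Suc s)" and k: "2 * Suc k + 2 \<le> n - Suc s"
    using Suc.prems by simp_all
  have "2 * deficit B (Suc (n - Suc s)) (Suc (Suc k)) = (Suc k + 1) * (Suc k + 2) * (Suc k + 3)"
    using Suc.IH[of "Suc k"] Suc.prems unfolding shift by simp
  then have "2 * deficit B (n - Suc s) (Suc k) = Suc k * (Suc k + 1) * (Suc k + 2)"
    by (rule deficit_tight_descent(1)[OF k])
  then show ?case by (simp add: algebra_simps)
qed

lemma low_edges_tight_if_optimal:
  assumes cr: "crossings n B = Z n" and "2 * k + 4 + n \<le> 2 * j" and "j \<le> n"
  shows "2 * (\<Sum>u\<in>{1..j - 1}. low_edges B (j - 1) k u) = (k + 1) * (k + 2)"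
proof -
  from assms have k: "2 * k + 2 \<le> j - 1" and "2 * (k + (n - j)) + 4 \<le> n" and "n - (n - j) = Suc (j - 1)"
    by arith+
  then have "2 * deficit B (Suc (j - 1)) (Suc k) = (k + 1) * (k + 2) * (k + 3)"
    using deficit_tight_below[OF cr, of k "n - j"] by simp
  then show ?thesis by (rule deficit_tight_descent(2)[OF k])
qed

lemma side_count_assoc_order_nth:
  assumes "p < j - i - 1"
  shows "side_count B (j - 1) i (assoc_order B i j ! p) (B i j)
           = above_diff B i (assoc_order B i j ! p) (B i j) + p"
proof -
  let ?l = "assoc_order B i j ! p"
  have p: "p < length (assoc_order B i j)" using assms by (simp add: length_assoc_order)
  then have "?l \<in> {i<..<j}" using nth_mem set_assoc_order by metis
  then have "i < ?l" "?l \<le> j - 1" "Suc (j - 1) = j" by auto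
  moreover have "above_diff B i ?l (B i j) = (\<Sum>w\<in>{1..<i}. of_bool (B w ?l \<noteq> B i j))"
    unfolding above_diff_def by (simp add: sum_of_bool_card)
  ultimately show ?thesis
    using side_count_eq_above_plus_position[of i ?l "j - 1" B] assoc_position_nth[OF p] by simp
qed

lemma assoc_order_position_lt_if_optimal:
  assumes cr: "crossings n B = Z n" and k: "2 * k + 4 + n \<le> 2 * j" "j \<le> n"
    and "1 \<le> i" "p < j - i - 1"
    and "side_count B (j - 1) i (assoc_order B i j ! p) (B i j) \<le> k"
  shows "p < k + 2 - i"
proof -
  from assms have j: "Suc (j - 1) = j" and "2 * k + 2 \<le> j - 1" "i \<le> j - 1" by auto
  with low_edges_tight_if_optimal[OF cr k] assms(4-) show ?thesis
    by (intro position_lt_if_low_edges_tight[of k "j - 1" B, unfolded j]) (auto simp: length_assoc_order)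
qed

theorem lemma12:
  fixes n i j m :: nat and blue :: "nat \<Rightarrow> nat \<Rightarrow> bool"
  assumes "normalized_2page n blue" and "crossing_optimal n blue"
    and "1 \<le> i" and "i < j" and "j \<le> n"
    and "1 \<le> m"
    and "int m \<le> min (int j - int (n div 2) - 1) (int j - int i - 1)"
  shows "int (above_diff blue i (assoc_order blue i j ! (m - 1)) (blue i j))
           \<ge> min (int j - int ((n + 1) div 2) - int m) (int i - 1)"
proof -
  let ?l = "assoc_order blue i j ! (m - 1)"
  define a where "a = above_diff blue i ?l (blue i j)"
  have cr: "crossings n blue = Z n" using assms(2) unfolding crossing_optimal_def .
  have m: "m - 1 < j - i - 1" using assms(6,7) by linarith
  then have side: "side_count blue (j - 1) i ?l (blue i j) = a + (m - 1)"
    unfolding a_def by (rule side_count_assoc_order_nth)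
  show ?thesis
  proof (cases "2 * (a + (m - 1)) + 4 + n \<le> 2 * j")
    case True
    then have "m - 1 < a + (m - 1) + 2 - i"
      using assoc_order_position_lt_if_optimal[OF cr True assms(5,3) m] side by simp
    then show ?thesis unfolding a_def by linarith
  next
    case False
    then have "int j - int ((n + 1) div 2) - int m \<le> int a" using assms(6) by presburger
    then show ?thesis unfolding a_def by linarith
  qed
qed

end
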